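(* Under the setting below, for every $\epsilon>0$ there exists a positive integer $T(\epsilon)$ such that for every profile $\boldsymbol{\Psi}=(\Psi_1,\dots,\Psi_N)$ of stationary policies, every initial distribution of the states, and every $i\in\{1,\dots,N\}$, $$\big|V_i(\boldsymbol{\Psi})-V_i^{T(\epsilon)}(\boldsymbol{\Psi})\big|<\epsilon,$$ where for a positive integer $T$, $$V_i^{T}(\boldsymbol{\Psi}):=\frac1T\sum_{t=1}^{T}\sum_{(\boldsymbol{s},\boldsymbol{a})}\mathbb{P}^{\Psi_i}_t(s_i,a_i)\,w_i\Big(\prod_{j\ne i}\mathbb{P}^{\Psi_j}_t(s_j,a_j)\Big)\,v_i\big(U_i(\boldsymbol a)\big)$$ is the average prospect payoff of prosumer $i$ over the first $T$ steps when all prosumers follow $\boldsymbol\Psi$.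
   Context: There are $N$ prosumers. Prosumer $i$ has state set $\mathcal{S}_i=\{0,\dots,S_i^{\max}\}$, action set $\mathcal{A}_i=\mathcal{L}_i\times\mathcal{D}_i$ with $\mathcal{L}_i=\{0,\dots,L_i^{\max}\}$, $\mathcal{D}_i=\{0,\dots,D_i^{\max}\}$, and state dynamics $S_i(t+1)=\min\{[S_i(t)+G_i(t)+D_i(t)-L_i(t)]^+,S_i^{\max}\}$ where $A_i(t)=(L_i(t),D_i(t))$, $[x]^+=\max\{0,x\}$, and in state $s$ only actions $(l,d)$ with $0\le s+d-l\le S_i^{\max}$ are taken. The processes $(G_i(t))_{t\ge1}$, $i=1,\dots,N$, are mutually independent, each i.i.d. and $\mathbb{Z}$-valued with law $G_i$, and $\lambda_i:=\min_{|k|\le S_i^{\max}}\mathbb{P}\{G_i=k\}>0$ for all $i$. A stationary policy $\Psi_i$ draws $A_i(t)$ from a distribution $\Psi_i(\cdot\mid S_i(t))$ depending only on the current state; under a profile of stationary policies the state-action processes of different prosumers are independent, and $\mathbb{P}^{\Psi_j}_t(s,a):=\mathbb{P}^{\Psi_j}\{S_j(t)=s,A_j(t)=a\}$. $U_i(\boldsymbol a)\in\mathbb{R}$ is prosumer $i$'s instantaneous payoff for the joint action $\boldsymbol a$; $w_i:[0,1]\to\mathbb{R}$ is a continuous weighting function and $v_i:\mathbb{R}\to\mathbb{R}$ a valuation function. For a profile of stationary policies, $V_i(\boldsymbol\Psi):=\lim_{T\to\infty}V_i^T(\boldsymbol\Psi)$ (this limit exists and equals $\sum_{(\boldsymbol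 s,\boldsymbol a)}\pi^{\Psi_i}(s_i)\Psi_i(a_i|s_i)\,w_i\big(\prod_{j\ne i}\Psi_j(a_j|s_j)\pi^{\Psi_j}(s_j)\big)v_i(U_i(\boldsymbol a))$, where $\pi^{\Psi_j}$ is the unique stationary distribution of prosumer $j$'s state chain under $\Psi_j$). The sums range over all joint states $\boldsymbol s\in\prod_j\mathcal{S}_j$ and joint actions $\boldsymbol a\in\prod_j\mathcal{A}_j$. *)

theory Defs
  imports "HOL-Probability.Probability"
begin

text \<open>Prosumers are indexed by 1..N. States are naturals in 0..Smax i,
  actions are pairs (l,d) with l in 0..Lmax i and d in 0..Dmax i.\<close>

definition state_set :: "nat \<Rightarrow> nat set" where
  "state_set Smax = {0..Smax}"

definition action_set :: "nat \<Rightarrow> nat \<Rightarrow> (nat \<times> nat) set" where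
  "action_set Lmax Dmax = {0..Lmax} \<times> {0..Dmax}"

definition admissible :: "nat \<Rightarrow> nat \<Rightarrow> nat \<Rightarrow> nat \<Rightarrow> (nat \<times> nat) set" where
  "admissible Smax Lmax Dmax s =
     {(l, d). l \<le> Lmax \<and> d \<le> Dmax \<and> l \<le> s + d \<and> s + d - l \<le> Smax}"

definition next_state :: "nat \<Rightarrow> nat \<Rightarrow> int \<Rightarrow> nat \<times> nat \<Rightarrow> nat" where
  "next_state Smax s g a =
     nat (min (max 0 (int s + g + int (snd a) - int (fst a))) (int Smax))"

text \<open>Distribution of the state S(n+1) of a single prosumer with state cap Smax,
  generation law G, stationary policy Psi and initial distribution mu (law of S(1)).\<close>
primrec state_dist :: "nat \<Rightarrow> int pmf \<Rightarrow> (nat \<Rightarrow> (nat \<times> nat) pmf) \<Rightarrow> nat pmf \<Rightarrow> nat \<Rightarrow> nat pmf" where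
  "state_dist Smax G Psi mu 0 = mu"
| "state_dist Smax G Psi mu (Suc n) =
     bind_pmf (state_dist Smax G Psi mu n)
       (\<lambda>s. bind_pmf (Psi s) (\<lambda>a. map_pmf (\<lambda>g. next_state Smax s g a) G))"

text \<open>P_t(s,a) = P{S(t)=s, A(t)=a}, for t \<ge> 1.\<close>
definition sa_prob :: "nat \<Rightarrow> int pmf \<Rightarrow> (nat \<Rightarrow> (nat \<times> nat) pmf) \<Rightarrow> nat pmf \<Rightarrow> nat
    \<Rightarrow> nat \<Rightarrow> nat \<times> nat \<Rightarrow> real" where
  "sa_prob Smax G Psi mu t s a =
     pmf (bind_pmf (state_dist Smax G Psi mu (t - 1)) (\<lambda>s'. map_pmf (Pair s') (Psi s'))) (s, a)"

definition VT ::
  "nat \<Rightarrow> (nat \<Rightarrow> nat) \<Rightarrow> (nat \<Rightarrow> nat) \<Rightarrow> (nat \<Rightarrow> nat) \<Rightarrow> (nat \<Rightarrow> int pmf)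
   \<Rightarrow> (nat \<Rightarrow> (nat \<Rightarrow> nat \<times> nat) \<Rightarrow> real) \<Rightarrow> (nat \<Rightarrow> real \<Rightarrow> real) \<Rightarrow> (nat \<Rightarrow> real \<Rightarrow> real)
   \<Rightarrow> (nat \<Rightarrow> nat \<Rightarrow> (nat \<times> nat) pmf) \<Rightarrow> (nat \<Rightarrow> nat pmf) \<Rightarrow> nat \<Rightarrow> nat \<Rightarrow> real" where
  "VT N Smax Lmax Dmax G U w v Psi mu i T =
     (1 / real T) * (\<Sum>t = 1..T.
        \<Sum>s \<in> PiE {1..N} (\<lambda>j. state_set (Smax j)).
        \<Sum>a \<in> PiE {1..N} (\<lambda>j. action_set (Lmax j) (Dmax j)).
          sa_prob (Smax i) (G i) (Psi i) (mu i) t (s i) (a i)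
          * w i (\<Prod>j \<in> {1..N} - {i}. sa_prob (Smax j) (G j) (Psi j) (mu j) t (s j) (a j))
          * v i (U i a))"

definition Vlim ::
  "nat \<Rightarrow> (nat \<Rightarrow> nat) \<Rightarrow> (nat \<Rightarrow> nat) \<Rightarrow> (nat \<Rightarrow> nat) \<Rightarrow> (nat \<Rightarrow> int pmf)
   \<Rightarrow> (nat \<Rightarrow> (nat \<Rightarrow> nat \<times> nat) \<Rightarrow> real) \<Rightarrow> (nat \<Rightarrow> real \<Rightarrow> real) \<Rightarrow> (nat \<Rightarrow> real \<Rightarrow> real)
   \<Rightarrow> (nat \<Rightarrow> nat \<Rightarrow> (nat \<times> nat) pmf) \<Rightarrow> (nat \<Rightarrow> nat pmf) \<Rightarrow> nat \<Rightarrow> real" where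
  "Vlim N Smax Lmax Dmax G U w v Psi mu i = lim (\<lambda>T. VT N Smax Lmax Dmax G U w v Psi mu i T)"

definition stationary_profile ::
  "nat \<Rightarrow> (nat \<Rightarrow> nat) \<Rightarrow> (nat \<Rightarrow> nat) \<Rightarrow> (nat \<Rightarrow> nat) \<Rightarrow> (nat \<Rightarrow> nat \<Rightarrow> (nat \<times> nat) pmf) \<Rightarrow> bool" where
  "stationary_profile N Smax Lmax Dmax Psi \<longleftrightarrow>
     (\<forall>j \<in> {1..N}. \<forall>s \<in> state_set (Smax j).
        set_pmf (Psi j s) \<subseteq> admissible (Smax j) (Lmax j) (Dmax j) s)"

end

theory Submission
  imports Defs
begin

text \<open>Every prosumer's state chain satisfies a Doeblin condition uniformly in the policy: whatever
  the state and the admissible action, the storage empties in one step with probability at least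
  \<open>\<lambda> > 0\<close>, a common lower bound for \<open>pmf (G j) k\<close> over \<open>|k| \<le> Smax j\<close>. Hence the state laws
  contract in total variation at rate \<open>1 - \<lambda>\<close> and form a Cauchy sequence with a modulus that is
  independent of the policies and of the initial laws. The instantaneous prospect payoff is a
  bounded and uniformly continuous function of these laws (since \<open>w\<^sub>i\<close> is uniformly continuous on
  \<open>[0, 1]\<close>), so it is uniformly Cauchy in time, and its Cesaro means \<open>V\<^sub>i\<^sup>T\<close> converge to \<open>V\<^sub>i\<close>
  uniformly as well. A common horizon \<open>T(\<epsilon>)\<close> exists because there are finitely many prosumers.\<close>

lemma next_state_le: "next_state S s g a \<le> S"
  unfolding next_state_def by (simp add: nat_le_iff)

definition transition :: "nat \<Rightarrow> int pmf \<Rightarrow> (nat \<Rightarrow> (nat \<times> nat) pmf) \<Rightarrow> nat \<Rightarrow> nat pmf" where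
  "transition S G P s = bind_pmf (P s) (\<lambda>a. map_pmf (\<lambda>g. next_state S s g a) G)"

lemma state_dist_Suc: "state_dist S G P mu (Suc n) = bind_pmf (state_dist S G P mu n) (transition S G P)"
  by (simp add: transition_def[abs_def])

lemma set_pmf_transition: "set_pmf (transition S G P s) \<subseteq> {0..S}"
  by (auto simp: transition_def next_state_le)

lemma set_pmf_state_dist:
  assumes "set_pmf mu \<subseteq> {0..S}"
  shows "set_pmf (state_dist S G P mu n) \<subseteq> {0..S}"
  using assms by (induction n) (auto simp: next_state_le)

lemma state_dist_add: "state_dist S G P mu (n + k) = state_dist S G P (state_dist S G P mu k) n"
  by (induction n) auto

lemma pmf_bind_finite_support:
  assumes "finite A" "set_pmf M \<subseteq> A"
  shows "pmf (bind_pmf M K) x = (\<Sum>s\<in>A. pmf M s * pmf (K s) x)"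
  unfolding pmf_bind
  by (subst integral_measure_pmf_real[OF assms(1)]) (use assms(2) in \<open>auto simp: mult.commute\<close>)

text \<open>For every admissible action some generation value in \<open>[-S, 0]\<close> empties the storage.\<close>
lemma transition_pmf_0_ge:
  assumes "set_pmf (P s) \<subseteq> admissible S L D s"
    and lam: "\<forall>k. \<bar>k\<bar> \<le> int S \<longrightarrow> lam \<le> pmf G k"
  shows "lam \<le> pmf (transition S G P s) 0"
proof -
  have fin: "finite (admissible S L D s)"
    by (rule finite_subset[of _ "{0..L} \<times> {0..D}"]) (auto simp: admissible_def)
  have empties: "lam \<le> pmf (map_pmf (\<lambda>g. next_state S s g a) G) 0" if "a \<in> admissible S L D s" for a
  proof -
    obtain l d where a: "a = (l, d)" by fastforce
    with that have h: "l \<le> s + d" "s + d - l \<le> S" by (auto simp: admissible_def)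
    define g where "g = - int (s + d - l)"
    have "\<bar>g\<bar> \<le> int S" using h by (simp add: g_def)
    with lam have "lam \<le> pmf G g" by blast
    also have "pmf G g = measure G {g}" by (simp add: measure_pmf_single)
    also have "\<dots> \<le> measure G ((\<lambda>g. next_state S s g a) -` {0})"
      by (rule measure_pmf.finite_measure_mono)
        (use h in \<open>auto simp: a g_def next_state_def of_nat_diff\<close>)
    finally show ?thesis by (simp add: pmf_map)
  qed
  have "lam = (\<Sum>a\<in>admissible S L D s. pmf (P s) a * lam)"
    using sum_pmf_eq_1[OF fin assms(1)] by (simp add: sum_distrib_right[symmetric])
  also have "\<dots> \<le> (\<Sum>a\<in>admissible S L D s. pmf (P s) a * pmf (map_pmf (\<lambda>g. next_state S s g a) G) 0)"
    by (intro sum_mono mult_left_mono empties) auto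
  also have "\<dots> = pmf (transition S G P s) 0"
    unfolding transition_def by (rule pmf_bind_finite_support[OF fin assms(1), symmetric])
  finally show ?thesis .
qed

definition pmf_l1_dist :: "'a set \<Rightarrow> 'a pmf \<Rightarrow> 'a pmf \<Rightarrow> real" where
  "pmf_l1_dist A mu nu = (\<Sum>x\<in>A. \<bar>pmf mu x - pmf nu x\<bar>)"

lemma pmf_l1_dist_le_2:
  assumes "finite A" "set_pmf mu \<subseteq> A" "set_pmf nu \<subseteq> A"
  shows "pmf_l1_dist A mu nu \<le> 2"
proof -
  have "pmf_l1_dist A mu nu \<le> (\<Sum>x\<in>A. pmf mu x + pmf nu x)"
    unfolding pmf_l1_dist_def by (intro sum_mono) (simp add: abs_diff_le_iff add_increasing)
  also have "\<dots> = 2"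
    using sum_pmf_eq_1[OF assms(1,2)] sum_pmf_eq_1[OF assms(1,3)] by (simp add: sum.distrib)
  finally show ?thesis .
qed

lemma abs_pmf_diff_le_pmf_l1_dist:
  assumes "finite A" "x \<in> A"
  shows "\<bar>pmf mu x - pmf nu x\<bar> \<le> pmf_l1_dist A mu nu"
  unfolding pmf_l1_dist_def using assms by (intro member_le_sum) auto

text \<open>Doeblin's coupling bound: the kernel mass \<open>lam\<close> that every state sends to \<open>z\<close> is common
  to both initial laws and cancels in the difference.\<close>
lemma pmf_l1_dist_bind_contraction:
  assumes A: "finite A" "z \<in> A" and mu: "set_pmf mu \<subseteq> A" and nu: "set_pmf nu \<subseteq> A"
    and K: "\<And>s. s \<in> A \<Longrightarrow> set_pmf (K s) \<subseteq> A" and Kz: "\<And>s. s \<in> A \<Longrightarrow> lam \<le> pmf (K s) z"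
  shows "pmf_l1_dist A (bind_pmf mu K) (bind_pmf nu K) \<le> (1 - lam) * pmf_l1_dist A mu nu"
proof -
  define \<delta> where "\<delta> s = pmf mu s - pmf nu s" for s
  define c where "c x = (if x = z then lam else 0)" for x
  have sum_\<delta>: "(\<Sum>s\<in>A. \<delta> s) = 0"
    using sum_pmf_eq_1[OF A(1) mu] sum_pmf_eq_1[OF A(1) nu] by (simp add: \<delta>_def sum_subtractf)
  have diff: "pmf (bind_pmf mu K) x - pmf (bind_pmf nu K) x = (\<Sum>s\<in>A. \<delta> s * (pmf (K s) x - c x))"
    for x
  proof -
    have "(\<Sum>s\<in>A. \<delta> s * (pmf (K s) x - c x)) = (\<Sum>s\<in>A. \<delta> s * pmf (K s) x) - (\<Sum>s\<in>A. \<delta> s) * c x"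
      by (simp add: right_diff_distrib sum_subtractf sum_distrib_right)
    then show ?thesis
      using sum_\<delta> by (simp add: pmf_bind_finite_support[OF A(1) mu] pmf_bind_finite_support[OF A(1) nu]
          \<delta>_def algebra_simps sum_subtractf)
  qed
  have residual_nonneg: "0 \<le> pmf (K s) x - c x" if "s \<in> A" for s x
    using Kz[OF that] by (auto simp: c_def)
  have residual_mass: "(\<Sum>x\<in>A. pmf (K s) x - c x) = 1 - lam" if "s \<in> A" for s
    using sum_pmf_eq_1[OF A(1) K[OF that]] A by (simp add: sum_subtractf c_def)
  have "pmf_l1_dist A (bind_pmf mu K) (bind_pmf nu K) \<le> (\<Sum>x\<in>A. \<Sum>s\<in>A. \<bar>\<delta> s\<bar> * (pmf (K s) x - c x))"
    unfolding pmf_l1_dist_def diff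
    by (intro sum_mono order_trans[OF sum_abs]) (simp add: abs_mult abs_of_nonneg[OF residual_nonneg])
  also have "\<dots> = (\<Sum>s\<in>A. \<bar>\<delta> s\<bar> * (\<Sum>x\<in>A. pmf (K s) x - c x))"
    by (subst sum.swap) (simp add: sum_distrib_left)
  also have "\<dots> = (1 - lam) * pmf_l1_dist A mu nu"
    by (simp add: residual_mass pmf_l1_dist_def \<delta>_def sum_distrib_left mult.commute)
  finally show ?thesis .
qed

lemma state_dist_pmf_l1_dist_le:
  assumes mu: "set_pmf mu \<subseteq> {0..S}" and nu: "set_pmf nu \<subseteq> {0..S}"
    and P: "\<forall>s\<le>S. set_pmf (P s) \<subseteq> admissible S L D s"
    and lam: "\<forall>k. \<bar>k\<bar> \<le> int S \<longrightarrow> lam \<le> pmf G k"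
  shows "pmf_l1_dist {0..S} (state_dist S G P mu n) (state_dist S G P nu n) \<le> 2 * (1 - lam) ^ n"
proof (induction n)
  case 0
  show ?case using pmf_l1_dist_le_2[OF _ mu nu] by simp
next
  case (Suc n)
  have "lam \<le> 1" using lam[rule_format, of 0] pmf_le_1[of G 0] by simp
  have "pmf_l1_dist {0..S} (state_dist S G P mu (Suc n)) (state_dist S G P nu (Suc n))
      \<le> (1 - lam) * pmf_l1_dist {0..S} (state_dist S G P mu n) (state_dist S G P nu n)"
    unfolding state_dist_Suc
    by (rule pmf_l1_dist_bind_contraction[OF _ _ set_pmf_state_dist[OF mu] set_pmf_state_dist[OF nu]])
      (use set_pmf_transition transition_pmf_0_ge P lam in auto)
  also have "\<dots> \<le> (1 - lam) * (2 * (1 - lam) ^ n)"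
    using Suc.IH \<open>lam \<le> 1\<close> by (intro mult_left_mono) auto
  finally show ?case by simp
qed

lemma state_dist_pmf_Cauchy:
  assumes mu: "set_pmf mu \<subseteq> {0..S}" and P: "\<forall>s\<le>S. set_pmf (P s) \<subseteq> admissible S L D s"
    and lam: "\<forall>k. \<bar>k\<bar> \<le> int S \<longrightarrow> lam \<le> pmf G k" and "0 \<le> lam"
    and "n0 \<le> n" "n0 \<le> m"
  shows "\<bar>pmf (state_dist S G P mu n) x - pmf (state_dist S G P mu m) x\<bar> \<le> 2 * (1 - lam) ^ n0"
proof -
  have "lam \<le> 1" using lam[rule_format, of 0] pmf_le_1[of G 0] by simp
  have shift: "\<bar>pmf (state_dist S G P mu n) x - pmf (state_dist S G P mu (n + k)) x\<bar> \<le> 2 * (1 - lam) ^ n"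
    for n k
  proof (cases "x \<le> S")
    case True
    have "\<bar>pmf (state_dist S G P mu n) x - pmf (state_dist S G P (state_dist S G P mu k) n) x\<bar>
        \<le> 2 * (1 - lam) ^ n"
      using abs_pmf_diff_le_pmf_l1_dist[of "{0..S}" x] True
        state_dist_pmf_l1_dist_le[OF mu set_pmf_state_dist[OF mu] P lam]
      by (meson atLeastAtMost_iff finite_atLeastAtMost le0 order_trans)
    then show ?thesis by (simp add: state_dist_add)
  next
    case False
    then have "x \<notin> set_pmf (state_dist S G P mu n)" "x \<notin> set_pmf (state_dist S G P mu (n + k))"
      using set_pmf_state_dist[OF mu] by fastforce+
    then show ?thesis using \<open>lam \<le> 1\<close> by (simp add: set_pmf_iff)
  qed
  have "\<bar>pmf (state_dist S G P mu n) x - pmf (state_dist S G P mu m) x\<bar> \<le> 2 * (1 - lam) ^ min n m"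
    using shift[of n "m - n"] shift[of m "n - m"] by (cases "n \<le> m") (auto simp: abs_minus_commute)
  also have "\<dots> \<le> 2 * (1 - lam) ^ n0"
    using assms(4-6) \<open>lam \<le> 1\<close> by (simp add: power_decreasing)
  finally show ?thesis .
qed

text \<open>The summand of \<open>V\<^sub>i\<^sup>T\<close> at a fixed time, with \<open>q j s a\<close> in place of \<open>P\<^sub>t(s\<^sub>j, a\<^sub>j)\<close> and
  \<open>V a = v\<^sub>i(U\<^sub>i(a))\<close>.\<close>
definition prospect_sum ::
  "'s set \<Rightarrow> 'a set \<Rightarrow> (real \<Rightarrow> real) \<Rightarrow> ('a \<Rightarrow> real) \<Rightarrow> 'j \<Rightarrow> 'j set \<Rightarrow> ('j \<Rightarrow> 's \<Rightarrow> 'a \<Rightarrow> real) \<Rightarrow> real"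
  where "prospect_sum SS AA w V i J q = (\<Sum>s\<in>SS. \<Sum>a\<in>AA. q i s a * w (\<Prod>j\<in>J. q j s a) * V a)"

lemma continuous_on_Icc_bounded:
  fixes w :: "real \<Rightarrow> real"
  assumes "continuous_on {a..b} w"
  obtains M where "\<And>x. x \<in> {a..b} \<Longrightarrow> \<bar>w x\<bar> \<le> M"
proof -
  have "bounded (w ` {a..b})"
    by (rule compact_imp_bounded[OF compact_continuous_image[OF assms compact_Icc]])
  then obtain M where "\<forall>x\<in>{a..b}. \<bar>w x\<bar> \<le> M" by (auto simp: bounded_iff)
  then show ?thesis using that by force
qed

lemma uniformly_continuous_on_unit_prod:
  fixes w :: "real \<Rightarrow> real"
  assumes "continuous_on {0..1} w" "0 < \<eta>"
  obtains \<delta> where "0 < \<delta>"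
    "\<And>x y. (\<And>j. j \<in> J \<Longrightarrow> x j \<in> {0..1} \<and> y j \<in> {0..1} \<and> \<bar>x j - y j\<bar> \<le> \<delta>)
       \<Longrightarrow> \<bar>w (prod x J) - w (prod y J)\<bar> < \<eta>"
proof -
  obtain d where d: "0 < d"
    and close: "\<And>u v. u \<in> {0..1} \<Longrightarrow> v \<in> {0..1} \<Longrightarrow> \<bar>u - v\<bar> < d \<Longrightarrow> \<bar>w u - w v\<bar> < \<eta>"
    using compact_uniformly_continuous[OF assms(1) compact_Icc] assms(2)
    unfolding uniformly_continuous_on_def dist_real_def by metis
  show ?thesis
  proof
    show "0 < d / (card J + 1)" using d by simp
    fix x y assume xy: "\<And>j. j \<in> J \<Longrightarrow> x j \<in> {0..1} \<and> y j \<in> {0..1} \<and> \<bar>x j - y j\<bar> \<le> d / (card J + 1)"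
    have "\<bar>prod x J - prod y J\<bar> \<le> (\<Sum>j\<in>J. \<bar>x j - y j\<bar>)"
      using norm_prod_diff[of J x y] xy by auto
    also have "\<dots> \<le> card J * (d / (card J + 1))"
      using sum_mono[of J "\<lambda>j. \<bar>x j - y j\<bar>" "\<lambda>_. d / (card J + 1)"] xy by simp
    also have "\<dots> < d" using d by (simp add: field_simps)
    finally show "\<bar>w (prod x J) - w (prod y J)\<bar> < \<eta>"
      using xy by (intro close) (auto intro!: prod_nonneg prod_le_1)
  qed
qed

lemma prospect_summand_uniform:
  fixes w :: "real \<Rightarrow> real"
  assumes "continuous_on {0..1} w" "0 < \<eta>"
  obtains \<delta> where "0 < \<delta>"
    "\<And>x y. (\<And>j. j \<in> insert i J \<Longrightarrow> x j \<in> {0..1} \<and> y j \<in> {0..1} \<and> \<bar>x j - y j\<bar> \<le> \<delta>)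
       \<Longrightarrow> \<bar>x i * w (prod x J) - y i * w (prod y J)\<bar> \<le> \<eta>"
proof -
  obtain M where M: "\<And>u. u \<in> {0..1} \<Longrightarrow> \<bar>w u\<bar> \<le> M"
    using continuous_on_Icc_bounded[OF assms(1)] by blast
  define M' where "M' = \<bar>M\<bar> + 1"
  have "0 < M'" by (simp add: M'_def add_pos_nonneg)
  obtain d where d: "0 < d"
    and w_close: "\<And>x y. (\<And>j. j \<in> J \<Longrightarrow> x j \<in> {0..1} \<and> y j \<in> {0..1} \<and> \<bar>x j - y j\<bar> \<le> d)
       \<Longrightarrow> \<bar>w (prod x J) - w (prod y J)\<bar> < \<eta> / 2"
    using uniformly_continuous_on_unit_prod[OF assms(1), of "\<eta> / 2"] assms(2) by auto
  show ?thesis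
  proof
    show "0 < min d (\<eta> / (2 * M'))" using d assms(2) \<open>0 < M'\<close> by simp
    fix x y
    assume xy: "\<And>j. j \<in> insert i J \<Longrightarrow> x j \<in> {0..1} \<and> y j \<in> {0..1} \<and> \<bar>x j - y j\<bar> \<le> min d (\<eta> / (2 * M'))"
    have "prod x J \<in> {0..1}" using xy by (auto intro!: prod_nonneg prod_le_1)
    then have wx: "\<bar>w (prod x J)\<bar> \<le> M'" using M by (fastforce simp: M'_def)
    have xi: "\<bar>x i - y i\<bar> \<le> \<eta> / (2 * M')" "\<bar>y i\<bar> \<le> 1" using xy by auto
    have wd: "\<bar>w (prod x J) - w (prod y J)\<bar> \<le> \<eta> / 2" using w_close[of x y] xy by fastforce
    have "x i * w (prod x J) - y i * w (prod y J)
        = (x i - y i) * w (prod x J) + y i * (w (prod x J) - w (prod y J))"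
      by (simp add: algebra_simps)
    also have "\<bar>\<dots>\<bar> \<le> \<eta> / (2 * M') * M' + 1 * (\<eta> / 2)"
    proof (intro order_trans[OF abs_triangle_ineq] add_mono)
      show "\<bar>(x i - y i) * w (prod x J)\<bar> \<le> \<eta> / (2 * M') * M'"
        unfolding abs_mult by (rule mult_mono) (use xi wx in auto)
      show "\<bar>y i * (w (prod x J) - w (prod y J))\<bar> \<le> 1 * (\<eta> / 2)"
        unfolding abs_mult by (rule mult_mono) (use xi wd in auto)
    qed
    also have "\<dots> = \<eta>" using \<open>0 < M'\<close> by (simp add: field_simps)
    finally show "\<bar>x i * w (prod x J) - y i * w (prod y J)\<bar> \<le> \<eta>" .
  qed
qed

lemma prospect_sum_uniform:
  fixes w :: "real \<Rightarrow> real"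
  assumes "continuous_on {0..1} w" "0 < \<eta>"
  obtains \<delta> where "0 < \<delta>"
    "\<And>q q'. (\<And>j s a. j \<in> insert i J \<Longrightarrow> q j s a \<in> {0..1} \<and> q' j s a \<in> {0..1} \<and> \<bar>q j s a - q' j s a\<bar> \<le> \<delta>)
       \<Longrightarrow> \<bar>prospect_sum SS AA w V i J q - prospect_sum SS AA w V i J q'\<bar> \<le> \<eta>"
proof -
  define C where "C = real (card SS) * (\<Sum>a\<in>AA. \<bar>V a\<bar>)"
  have "0 \<le> C" by (simp add: C_def sum_nonneg)
  then have "0 < \<eta> / (C + 1)" using assms(2) by simp
  then obtain \<delta> where "0 < \<delta>" and term_close:
    "\<And>x y. (\<And>j. j \<in> insert i J \<Longrightarrow> x j \<in> {0..1} \<and> y j \<in> {0..1} \<and> \<bar>x j - y j\<bar> \<le> \<delta>)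
       \<Longrightarrow> \<bar>x i * w (prod x J) - y i * w (prod y J)\<bar> \<le> \<eta> / (C + 1)"
    using prospect_summand_uniform[OF assms(1)] by metis
  show ?thesis
  proof (rule that[OF \<open>0 < \<delta>\<close>])
    fix q q' :: "'a \<Rightarrow> 'b \<Rightarrow> 'c \<Rightarrow> real"
    assume qq': "\<And>j s a. j \<in> insert i J \<Longrightarrow> q j s a \<in> {0..1} \<and> q' j s a \<in> {0..1} \<and> \<bar>q j s a - q' j s a\<bar> \<le> \<delta>"
    define f where "f q s a = q i s a * w (\<Prod>j\<in>J. q j s a) * V a" for q :: "'a \<Rightarrow> 'b \<Rightarrow> 'c \<Rightarrow> real" and s a
    have summand_close: "\<bar>f q s a - f q' s a\<bar> \<le> \<eta> / (C + 1) * \<bar>V a\<bar>" for s a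
    proof -
      have "\<bar>q i s a * w (\<Prod>j\<in>J. q j s a) - q' i s a * w (\<Prod>j\<in>J. q' j s a)\<bar> \<le> \<eta> / (C + 1)"
        using term_close[of "\<lambda>j. q j s a" "\<lambda>j. q' j s a"] qq' by blast
      then show ?thesis
        unfolding f_def left_diff_distrib[symmetric] abs_mult by (rule mult_right_mono) simp
    qed
    have "\<bar>prospect_sum SS AA w V i J q - prospect_sum SS AA w V i J q'\<bar>
        = \<bar>\<Sum>s\<in>SS. \<Sum>a\<in>AA. f q s a - f q' s a\<bar>"
      by (simp add: prospect_sum_def f_def sum_subtractf)
    also have "\<dots> \<le> (\<Sum>s\<in>SS. \<Sum>a\<in>AA. \<bar>f q s a - f q' s a\<bar>)"
      by (rule order_trans[OF sum_abs sum_mono[OF sum_abs]])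
    also have "\<dots> \<le> (\<Sum>s\<in>SS. \<Sum>a\<in>AA. \<eta> / (C + 1) * \<bar>V a\<bar>)"
      by (intro sum_mono summand_close)
    also have "\<dots> = C * (\<eta> / (C + 1))"
      unfolding sum_distrib_left[symmetric] sum_constant C_def by (simp only: mult_ac)
    also have "\<dots> \<le> \<eta>" using \<open>0 \<le> C\<close> assms(2) by (simp add: field_simps)
    finally show "\<bar>prospect_sum SS AA w V i J q - prospect_sum SS AA w V i J q'\<bar> \<le> \<eta>" .
  qed
qed

lemma prospect_sum_bounded:
  fixes w :: "real \<Rightarrow> real"
  assumes "continuous_on {0..1} w"
  obtains B where "\<And>q. (\<And>j s a. j \<in> insert i J \<Longrightarrow> q j s a \<in> {0..1})
    \<Longrightarrow> \<bar>prospect_sum SS AA w V i J q\<bar> \<le> B"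
proof -
  obtain M where M: "\<And>u. u \<in> {0..1} \<Longrightarrow> \<bar>w u\<bar> \<le> M"
    using continuous_on_Icc_bounded[OF assms] by blast
  show ?thesis
  proof (rule that)
    fix q :: "'a \<Rightarrow> 'b \<Rightarrow> 'c \<Rightarrow> real"
    assume q: "\<And>j s a. j \<in> insert i J \<Longrightarrow> q j s a \<in> {0..1}"
    have summand_bound: "\<bar>q i s a * w (\<Prod>j\<in>J. q j s a) * V a\<bar> \<le> M * \<bar>V a\<bar>" for s a
    proof -
      have "(\<Prod>j\<in>J. q j s a) \<in> {0..1}" using q by (auto intro!: prod_nonneg prod_le_1)
      then have "\<bar>q i s a\<bar> * \<bar>w (\<Prod>j\<in>J. q j s a)\<bar> \<le> 1 * M"
        using q[of i] M by (intro mult_mono) auto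
      then show ?thesis by (simp add: abs_mult mult_right_mono)
    qed
    have "\<bar>prospect_sum SS AA w V i J q\<bar> \<le> (\<Sum>s\<in>SS. \<Sum>a\<in>AA. \<bar>q i s a * w (\<Prod>j\<in>J. q j s a) * V a\<bar>)"
      unfolding prospect_sum_def by (rule order_trans[OF sum_abs sum_mono[OF sum_abs]])
    also have "\<dots> \<le> (\<Sum>s\<in>SS. \<Sum>a\<in>AA. M * \<bar>V a\<bar>)"
      by (intro sum_mono summand_bound)
    finally show "\<bar>prospect_sum SS AA w V i J q\<bar> \<le> card SS * (\<Sum>a\<in>AA. M * \<bar>V a\<bar>)" by simp
  qed
qed

definition cesaro_mean :: "(nat \<Rightarrow> real) \<Rightarrow> nat \<Rightarrow> real" where
  "cesaro_mean a T = (1 / real T) * (\<Sum>t = 1..T. a t)"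

lemma cesaro_mean_close:
  assumes tail: "\<And>t. t0 \<le> t \<Longrightarrow> \<bar>a t - L\<bar> \<le> \<eta>" and bound: "\<And>t. \<bar>a t - L\<bar> \<le> C"
    and "0 \<le> \<eta>" "0 < T"
  shows "\<bar>cesaro_mean a T - L\<bar> \<le> \<eta> + C * t0 / T"
proof -
  have "0 \<le> C" using bound[of 0] by linarith
  have pointwise: "\<bar>a t - L\<bar> \<le> \<eta> + (if t < t0 then C else 0)" for t
    using tail[of t] bound[of t] \<open>0 \<le> \<eta>\<close> by (cases "t < t0") auto
  have "(\<Sum>t = 1..T. if t < t0 then C else 0) = card {t \<in> {1..T}. t < t0} * C"
    unfolding sum.inter_filter[OF finite_atLeastAtMost, symmetric] by simp
  also have "\<dots> \<le> t0 * C"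
  proof (rule mult_right_mono)
    have "card {t \<in> {1..T}. t < t0} \<le> card {..<t0}" by (rule card_mono) auto
    then show "real (card {t \<in> {1..T}. t < t0}) \<le> real t0" by simp
  qed fact
  finally have head: "(\<Sum>t = 1..T. if t < t0 then C else 0) \<le> C * t0" by (simp add: mult.commute)
  have "\<bar>cesaro_mean a T - L\<bar> = (1 / real T) * \<bar>\<Sum>t = 1..T. a t - L\<bar>"
    using \<open>0 < T\<close> by (simp add: cesaro_mean_def sum_subtractf abs_mult field_simps)
  also have "\<dots> \<le> (1 / real T) * (\<Sum>t = 1..T. \<eta> + (if t < t0 then C else 0))"
    by (intro mult_left_mono order_trans[OF sum_abs] sum_mono pointwise) simp
  also have "\<dots> \<le> (1 / real T) * (T * \<eta> + C * t0)"
    using head by (intro mult_left_mono) (auto simp: sum.distrib)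
  also have "\<dots> = \<eta> + C * t0 / T" using \<open>0 < T\<close> by (simp add: field_simps)
  finally show ?thesis .
qed

lemma Cauchy_tail_le_lim:
  fixes a :: "nat \<Rightarrow> real"
  assumes "convergent a" "\<And>t t'. t0 \<le> t \<Longrightarrow> t0 \<le> t' \<Longrightarrow> \<bar>a t - a t'\<bar> \<le> \<eta>" "t0 \<le> t"
  shows "\<bar>a t - lim a\<bar> \<le> \<eta>"
proof (rule LIMSEQ_le_const2)
  show "(\<lambda>t'. \<bar>a t - a t'\<bar>) \<longlonglongrightarrow> \<bar>a t - lim a\<bar>"
    using assms(1) by (intro tendsto_intros) (simp add: convergent_LIMSEQ_iff)
  show "\<exists>N. \<forall>t'\<ge>N. \<bar>a t - a t'\<bar> \<le> \<eta>" using assms(2,3) by blast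
qed

lemma uniformly_Cauchy_cesaro_mean:
  fixes a :: "'p \<Rightarrow> nat \<Rightarrow> real"
  assumes bounded: "\<And>p t. P p \<Longrightarrow> \<bar>a p t\<bar> \<le> B"
    and Cauchy: "\<And>\<eta>. 0 < \<eta> \<Longrightarrow> \<exists>t0. \<forall>p t t'. P p \<longrightarrow> t0 \<le> t \<longrightarrow> t0 \<le> t' \<longrightarrow> \<bar>a p t - a p t'\<bar> \<le> \<eta>"
    and "0 < \<epsilon>"
  shows "\<forall>\<^sub>F T in sequentially. \<forall>p. P p \<longrightarrow> \<bar>cesaro_mean (a p) T - lim (a p)\<bar> < \<epsilon>"
proof -
  obtain t0 where t0: "\<And>p t t'. P p \<Longrightarrow> t0 \<le> t \<Longrightarrow> t0 \<le> t' \<Longrightarrow> \<bar>a p t - a p t'\<bar> \<le> \<epsilon> / 3"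
    using Cauchy[of "\<epsilon> / 3"] \<open>0 < \<epsilon>\<close> by auto
  have convergent: "convergent (a p)" if "P p" for p
  proof (rule Cauchy_convergent, rule CauchyI)
    fix e :: real assume "0 < e"
    then obtain t1 where "\<forall>t t'. t1 \<le> t \<longrightarrow> t1 \<le> t' \<longrightarrow> \<bar>a p t - a p t'\<bar> \<le> e / 2"
      using Cauchy[of "e / 2"] \<open>P p\<close> by auto
    then show "\<exists>M. \<forall>m\<ge>M. \<forall>n\<ge>M. norm (a p m - a p n) < e" using \<open>0 < e\<close> by fastforce
  qed
  have close: "\<bar>cesaro_mean (a p) T - lim (a p)\<bar> \<le> \<epsilon> / 3 + 2 * \<bar>B\<bar> * t0 / T"
    if "P p" "0 < T" for p T
  proof (rule cesaro_mean_close)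
    show "\<bar>a p t - lim (a p)\<bar> \<le> \<epsilon> / 3" if "t0 \<le> t" for t
      using Cauchy_tail_le_lim[OF convergent t0] \<open>P p\<close> that by blast
    have "\<bar>lim (a p)\<bar> \<le> B"
      using convergent[OF \<open>P p\<close>] bounded[OF \<open>P p\<close>]
      by (intro LIMSEQ_le_const2[OF tendsto_rabs]) (auto simp: convergent_LIMSEQ_iff)
    then show "\<bar>a p t - lim (a p)\<bar> \<le> 2 * \<bar>B\<bar>" for t
      using bounded[OF \<open>P p\<close>, of t] by linarith
  qed (use \<open>0 < \<epsilon>\<close> \<open>0 < T\<close> in auto)
  have "\<forall>\<^sub>F T in sequentially. 2 * \<bar>B\<bar> * t0 / real T < \<epsilon> / 3"
    using lim_const_over_n[of "2 * \<bar>B\<bar> * t0"] \<open>0 < \<epsilon>\<close> by (intro order_tendstoD(2)) auto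
  with eventually_gt_at_top[of 0] show ?thesis
  proof eventually_elim
    case (elim T)
    show ?case
    proof (intro allI impI)
      fix p assume "P p"
      with close[of p T] elim show "\<bar>cesaro_mean (a p) T - lim (a p)\<bar> < \<epsilon>" by linarith
    qed
  qed
qed

lemma uniformly_Cauchy_lim_cesaro_mean:
  fixes a :: "'p \<Rightarrow> nat \<Rightarrow> real"
  assumes "\<And>p t. P p \<Longrightarrow> \<bar>a p t\<bar> \<le> B"
    and "\<And>\<eta>. 0 < \<eta> \<Longrightarrow> \<exists>t0. \<forall>p t t'. P p \<longrightarrow> t0 \<le> t \<longrightarrow> t0 \<le> t' \<longrightarrow> \<bar>a p t - a p t'\<bar> \<le> \<eta>"
    and "0 < \<epsilon>"
  shows "\<forall>\<^sub>F T in sequentially. \<forall>p. P p \<longrightarrow> \<bar>lim (cesaro_mean (a p)) - cesaro_mean (a p) T\<bar> < \<epsilon>"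
proof -
  have "lim (cesaro_mean (a p)) = lim (a p)" if "P p" for p
  proof (rule limI, rule tendstoI)
    fix e :: real assume "0 < e"
    have "\<forall>\<^sub>F T in sequentially. \<forall>p. P p \<longrightarrow> \<bar>cesaro_mean (a p) T - lim (a p)\<bar> < e"
      by (rule uniformly_Cauchy_cesaro_mean[OF assms(1,2) \<open>0 < e\<close>])
    then show "\<forall>\<^sub>F T in sequentially. dist (cesaro_mean (a p) T) (lim (a p)) < e"
      by eventually_elim (use \<open>P p\<close> in \<open>auto simp: dist_real_def\<close>)
  qed
  moreover have "\<forall>\<^sub>F T in sequentially. \<forall>p. P p \<longrightarrow> \<bar>cesaro_mean (a p) T - lim (a p)\<bar> < \<epsilon>"
    by (rule uniformly_Cauchy_cesaro_mean[OF assms])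
  ultimately show ?thesis
    by (auto elim!: eventually_mono simp: abs_minus_commute)
qed

lemma sa_prob_eq: "sa_prob S G P mu t s a = pmf (state_dist S G P mu (t - 1)) s * pmf (P s) a"
proof -
  have "sa_prob S G P mu t s a
      = (\<Sum>s'\<in>{s}. pmf (state_dist S G P mu (t - 1)) s' * pmf (map_pmf (Pair s') (P s')) (s, a))"
    unfolding sa_prob_def pmf_bind
    by (subst integral_measure_pmf_real[of "{s}"]) (auto simp: pmf_eq_0_set_pmf mult.commute)
  also have "\<dots> = pmf (state_dist S G P mu (t - 1)) s * pmf (P s) a"
    by (simp add: pmf_map_inj' inj_on_def)
  finally show ?thesis .
qed

lemma sa_prob_Cauchy:
  assumes mu: "set_pmf mu \<subseteq> {0..S}" and P: "\<forall>s\<le>S. set_pmf (P s) \<subseteq> admissible S L D s"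
    and lam: "\<forall>k. \<bar>k\<bar> \<le> int S \<longrightarrow> lam \<le> pmf G k" and "0 \<le> lam"
    and "n0 < t" "n0 < t'"
  shows "\<bar>sa_prob S G P mu t s a - sa_prob S G P mu t' s a\<bar> \<le> 2 * (1 - lam) ^ n0"
proof -
  have "\<bar>sa_prob S G P mu t s a - sa_prob S G P mu t' s a\<bar>
      = \<bar>pmf (state_dist S G P mu (t - 1)) s - pmf (state_dist S G P mu (t' - 1)) s\<bar> * pmf (P s) a"
    by (simp add: sa_prob_eq left_diff_distrib[symmetric] abs_mult)
  also have "\<dots> \<le> \<bar>pmf (state_dist S G P mu (t - 1)) s - pmf (state_dist S G P mu (t' - 1)) s\<bar>"
    by (simp add: mult_left_le pmf_le_1)
  also have "\<dots> \<le> 2 * (1 - lam) ^ n0"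
    using assms(5,6) by (intro state_dist_pmf_Cauchy[OF mu P lam \<open>0 \<le> lam\<close>]) auto
  finally show ?thesis .
qed

lemma generation_minorant:
  fixes G :: "nat \<Rightarrow> int pmf"
  assumes "\<forall>i \<in> {1..N}. \<forall>k::int. \<bar>k\<bar> \<le> int (Smax i) \<longrightarrow> pmf (G i) k > 0"
  obtains lam where "0 < lam" "\<And>j k. j \<in> {1..N} \<Longrightarrow> \<bar>k\<bar> \<le> int (Smax j) \<Longrightarrow> lam \<le> pmf (G j) k"
proof
  define K where "K = (SIGMA j:{1..N}. {- int (Smax j)..int (Smax j)})"
  have "finite K" unfolding K_def by auto
  show "0 < Min (insert 1 ((\<lambda>(j, k). pmf (G j) k) ` K))"
    using \<open>finite K\<close> assms by (auto simp: K_def abs_le_iff)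
  show "Min (insert 1 ((\<lambda>(j, k). pmf (G j) k) ` K)) \<le> pmf (G j) k"
    if "j \<in> {1..N}" "\<bar>k\<bar> \<le> int (Smax j)" for j k
    using \<open>finite K\<close> that by (intro Min_le) (auto simp: K_def abs_le_iff)
qed

lemma VT_eq_cesaro_mean:
  "VT N Smax Lmax Dmax G U w v Psi mu i =
     cesaro_mean (\<lambda>t. prospect_sum (PiE {1..N} (\<lambda>j. state_set (Smax j)))
       (PiE {1..N} (\<lambda>j. action_set (Lmax j) (Dmax j))) (w i) (\<lambda>a. v i (U i a)) i ({1..N} - {i})
       (\<lambda>j s a. sa_prob (Smax j) (G j) (Psi j) (mu j) t (s j) (a j)))"
  by (simp add: fun_eq_iff VT_def cesaro_mean_def prospect_sum_def)

lemma VT_converges_uniformly: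
  fixes G :: "nat \<Rightarrow> int pmf" and w :: "nat \<Rightarrow> real \<Rightarrow> real"
  assumes lambda_pos: "\<forall>i \<in> {1..N}. \<forall>k::int. \<bar>k\<bar> \<le> int (Smax i) \<longrightarrow> pmf (G i) k > 0"
    and w_cont: "continuous_on {0..1} (w i)" and i: "i \<in> {1..N}" and "0 < \<epsilon>"
  shows "\<forall>\<^sub>F T in sequentially. \<forall>Psi mu. stationary_profile N Smax Lmax Dmax Psi
           \<longrightarrow> (\<forall>j \<in> {1..N}. set_pmf (mu j) \<subseteq> state_set (Smax j))
           \<longrightarrow> \<bar>Vlim N Smax Lmax Dmax G U w v Psi mu i - VT N Smax Lmax Dmax G U w v Psi mu i T\<bar> < \<epsilon>"
proof -
  obtain lam where "0 < lam" and lam: "\<And>j k. j \<in> {1..N} \<Longrightarrow> \<bar>k\<bar> \<le> int (Smax j) \<Longrightarrow> lam \<le> pmf (G j) k"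
    using generation_minorant[OF lambda_pos] by blast
  define P where "P = (\<lambda>(Psi, mu). stationary_profile N Smax Lmax Dmax Psi
    \<and> (\<forall>j \<in> {1..N}. set_pmf (mu j) \<subseteq> state_set (Smax j)))"
  define q where "q = (\<lambda>(Psi, mu) t j s a. sa_prob (Smax j) (G j) (Psi j) (mu j) t (s j) (a j))"
  define SS where "SS = PiE {1..N} (\<lambda>j. state_set (Smax j))"
  define AA where "AA = PiE {1..N} (\<lambda>j. action_set (Lmax j) (Dmax j))"
  define V where "V a = v i (U i a)" for a
  define J where "J = {1..N} - {i}"
  define payoff where "payoff p t = prospect_sum SS AA (w i) V i J (q p t)" for p t
  have q_unit: "q p t j s a \<in> {0..1}" for p t j s a
    by (auto simp: q_def sa_prob_def pmf_le_1 split: prod.splits)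
  have q_Cauchy: "\<bar>q p t j s a - q p t' j s a\<bar> \<le> 2 * (1 - lam) ^ n0"
    if "P p" "j \<in> {1..N}" "n0 < t" "n0 < t'" for p t t' j s a n0
  proof -
    obtain Psi mu where p: "p = (Psi, mu)" by fastforce
    have mu: "set_pmf (mu j) \<subseteq> {0..Smax j}"
      and Psi: "\<forall>s\<le>Smax j. set_pmf (Psi j s) \<subseteq> admissible (Smax j) (Lmax j) (Dmax j) s"
      using that by (auto simp: p P_def stationary_profile_def state_set_def)
    show ?thesis
      unfolding p q_def using that \<open>0 < lam\<close> lam by (auto intro!: sa_prob_Cauchy[OF mu Psi])
  qed
  obtain B where B: "\<And>q. (\<And>j s a. j \<in> insert i J \<Longrightarrow> q j s a \<in> {0..1})
      \<Longrightarrow> \<bar>prospect_sum SS AA (w i) V i J q\<bar> \<le> B"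
    using prospect_sum_bounded[OF w_cont, where i = i and J = J and SS = SS and AA = AA and V = V] by blast
  have "\<bar>payoff p t\<bar> \<le> B" for p t
    unfolding payoff_def by (rule B) (rule q_unit)
  moreover have "\<exists>t0. \<forall>p t t'. P p \<longrightarrow> t0 \<le> t \<longrightarrow> t0 \<le> t' \<longrightarrow> \<bar>payoff p t - payoff p t'\<bar> \<le> \<eta>"
    if "0 < \<eta>" for \<eta>
  proof -
    obtain \<delta> where "0 < \<delta>" and \<delta>: "\<And>q q'. (\<And>j s a. j \<in> insert i J \<Longrightarrow>
        q j s a \<in> {0..1} \<and> q' j s a \<in> {0..1} \<and> \<bar>q j s a - q' j s a\<bar> \<le> \<delta>) \<Longrightarrow>
      \<bar>prospect_sum SS AA (w i) V i J q - prospect_sum SS AA (w i) V i J q'\<bar> \<le> \<eta>"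
      using prospect_sum_uniform[OF w_cont \<open>0 < \<eta>\<close>, where i = i and J = J and SS = SS and AA = AA and V = V] by blast
    obtain n0 where "(1 - lam) ^ n0 < \<delta> / 2"
      using real_arch_pow_inv[of "\<delta> / 2" "1 - lam"] \<open>0 < lam\<close> \<open>0 < \<delta>\<close> by auto
    then have "\<bar>payoff p t - payoff p t'\<bar> \<le> \<eta>" if "P p" "Suc n0 \<le> t" "Suc n0 \<le> t'" for p t t'
      unfolding payoff_def
    proof (intro \<delta> conjI q_unit)
      fix j s a assume "j \<in> insert i J"
      then have "j \<in> {1..N}" using i by (auto simp: J_def)
      with that have "\<bar>q p t j s a - q p t' j s a\<bar> \<le> 2 * (1 - lam) ^ n0" by (intro q_Cauchy) auto
      with \<open>(1 - lam) ^ n0 < \<delta> / 2\<close> show "\<bar>q p t j s a - q p t' j s a\<bar> \<le> \<delta>" by linarith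
    qed
    then show ?thesis by blast
  qed
  ultimately have "\<forall>\<^sub>F T in sequentially. \<forall>p. P p \<longrightarrow> \<bar>lim (cesaro_mean (payoff p)) - cesaro_mean (payoff p) T\<bar> < \<epsilon>"
    using \<open>0 < \<epsilon>\<close> by (intro uniformly_Cauchy_lim_cesaro_mean)
  moreover have "VT N Smax Lmax Dmax G U w v Psi mu i = cesaro_mean (payoff (Psi, mu))" for Psi mu
    by (simp add: VT_eq_cesaro_mean payoff_def[abs_def] q_def SS_def AA_def V_def[abs_def] J_def)
  ultimately show ?thesis
    by (auto elim!: eventually_mono simp: P_def Vlim_def)
qed

theorem lemma2:
  fixes N :: nat
    and Smax Lmax Dmax :: "nat \<Rightarrow> nat"
    and G :: "nat \<Rightarrow> int pmf"
    and U :: "nat \<Rightarrow> (nat \<Rightarrow> nat \<times> nat) \<Rightarrow> real"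
    and w v :: "nat \<Rightarrow> real \<Rightarrow> real"
  assumes lambda_pos: "\<forall>i \<in> {1..N}. \<forall>k::int. \<bar>k\<bar> \<le> int (Smax i) \<longrightarrow> pmf (G i) k > 0"
    and w_cont: "\<forall>i \<in> {1..N}. continuous_on {0..1} (w i)"
  shows "\<forall>\<epsilon>>0. \<exists>T::nat. T > 0 \<and>
           (\<forall>Psi mu. stationary_profile N Smax Lmax Dmax Psi
              \<longrightarrow> (\<forall>j \<in> {1..N}. set_pmf (mu j) \<subseteq> state_set (Smax j))
              \<longrightarrow> (\<forall>i \<in> {1..N}.
                    \<bar>Vlim N Smax Lmax Dmax G U w v Psi mu i
                       - VT N Smax Lmax Dmax G U w v Psi mu i T\<bar> < \<epsilon>))"
proof -
  have uniform_horizon: "\<forall>\<^sub>F T in sequentially. 0 < T \<and> (\<forall>Psi mu. stationary_profile N Smax Lmax Dmax Psi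
           \<longrightarrow> (\<forall>j \<in> {1..N}. set_pmf (mu j) \<subseteq> state_set (Smax j))
           \<longrightarrow> (\<forall>i \<in> {1..N}. \<bar>Vlim N Smax Lmax Dmax G U w v Psi mu i
                                 - VT N Smax Lmax Dmax G U w v Psi mu i T\<bar> < \<epsilon>))"
    if "\<epsilon> > 0" for \<epsilon>
  proof -
    have "\<forall>\<^sub>F T in sequentially. \<forall>i \<in> {1..N}. \<forall>Psi mu. stationary_profile N Smax Lmax Dmax Psi
           \<longrightarrow> (\<forall>j \<in> {1..N}. set_pmf (mu j) \<subseteq> state_set (Smax j))
           \<longrightarrow> \<bar>Vlim N Smax Lmax Dmax G U w v Psi mu i - VT N Smax Lmax Dmax G U w v Psi mu i T\<bar> < \<epsilon>"
      using VT_converges_uniformly[OF lambda_pos _ _ that] w_cont by (intro eventually_ball_finite) auto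
    with eventually_gt_at_top[of 0] show ?thesis by eventually_elim blast
  qed
  show ?thesis by (intro allI impI eventually_happens'[OF sequentially_bot] uniform_horizon)
qed

end
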